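(* Let $q$ be a prime power, let $\mathbb{K}$ be a field containing $\mathbb{F}_q$, and let $f,g\in\mathbb{K}[X]$. Put $F(X)=f(X^{q-1})$ and $G(X)=\prod_{w\in\mathbb{F}_q^\times} g(wX)$. Suppose that $G$ has no repeated roots in an algebraic closure $\overline{\mathbb{K}}$ of $\mathbb{K}$. If every root of $g$ in $\overline{\mathbb{K}}$ is also a root of $F$, then $G$ divides $F$ in $\mathbb{K}[X]$. *)

theory Defs
  imports "HOL-Computational_Algebra.Polynomial" "HOL-Computational_Algebra.Primes"
          "HOL-Algebra.Algebraic_Closure_Type"
begin

definition is_subfield :: "'k::field set \<Rightarrow> bool" where
  "is_subfield S \<longleftrightarrow> 0 \<in> S \<and> 1 \<in> S \<and>
     (\<forall>x\<in>S. \<forall>y\<in>S. x + y \<in> S \<and> x - y \<in> S \<and> x * y \<in> S) \<and>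
     (\<forall>x\<in>S. inverse x \<in> S)"

end

theory Submission
  imports Defs
begin

text \<open>
  Over the algebraic closure, \<open>G\<close> is squarefree, so it divides \<open>F\<close> as soon as every root of \<open>G\<close>
  is a root of \<open>F\<close>; divisibility then descends to \<open>K[X]\<close> by uniqueness of division with
  remainder. A root \<open>x\<close> of \<open>G\<close> has \<open>g(w x) = 0\<close> for some nonzero \<open>w\<close> in \<open>F\<^sub>q\<close>, hence
  \<open>F(w x) = 0\<close> by hypothesis, and \<open>F(w x) = f(w^(q-1) x^(q-1)) = F(x)\<close> because \<open>w^(q-1) = 1\<close>
  in the multiplicative group of \<open>F\<^sub>q\<close>.
\<close>

lemma map_poly_to_ac_add [simp]:
  "map_poly to_ac (p + q) = map_poly to_ac p + map_poly to_ac q"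
  by (rule poly_eqI) (simp add: coeff_map_poly)

lemma map_poly_to_ac_mult [simp]:
  "map_poly to_ac (p * q) = map_poly to_ac p * map_poly to_ac q"
  by (rule poly_eqI) (simp add: coeff_map_poly coeff_mult to_ac_sum)

lemma map_poly_to_ac_prod:
  "map_poly to_ac (\<Prod>x\<in>A. p x) = (\<Prod>x\<in>A. map_poly to_ac (p x))"
  by (induction A rule: infinite_finite_induct) simp_all

lemma map_poly_to_ac_pcompose:
  "map_poly to_ac (pcompose p q) = pcompose (map_poly to_ac p) (map_poly to_ac q)"
  by (induction p rule: pCons_induct) (simp_all add: pcompose_pCons map_poly_pCons)

lemma map_poly_to_ac_eq_0_iff [simp]: "map_poly to_ac p = 0 \<longleftrightarrow> p = 0"
  by (rule map_poly_eq_0_iff) auto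

lemma degree_map_poly_to_ac [simp]: "degree (map_poly to_ac p) = degree p"
  by (rule degree_map_poly) auto

lemma dvd_map_poly_to_ac_imp_dvd:
  fixes p q :: "'k::field poly"
  assumes dvd: "map_poly to_ac p dvd map_poly to_ac q"
  shows "p dvd q"
proof (cases "p = 0")
  case True
  then show ?thesis using dvd by simp
next
  case False
  have "map_poly to_ac q = map_poly to_ac p * map_poly to_ac (q div p) + map_poly to_ac (q mod p)"
    by (simp flip: map_poly_to_ac_mult map_poly_to_ac_add)
  with dvd have dvd_mod: "map_poly to_ac p dvd map_poly to_ac (q mod p)"
    by (metis dvd_add_right_iff dvd_triv_left)
  show ?thesis
  proof (rule ccontr)
    assume "\<not> p dvd q"
    then have "q mod p \<noteq> 0" by (simp add: mod_eq_0_iff_dvd)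
    then have "degree p \<le> degree (q mod p)"
      using dvd_imp_degree_le[OF dvd_mod] by simp
    moreover have "degree (q mod p) < degree p"
      using \<open>q mod p \<noteq> 0\<close> False degree_mod_less' by blast
    ultimately show False by simp
  qed
qed

lemma rsquarefree_dvd:
  fixes p q :: "'a::idom poly"
  assumes "rsquarefree p" and "q dvd p"
  shows "rsquarefree q"
  unfolding rsquarefree_def
proof (intro conjI allI)
  show "q \<noteq> 0" using assms by (auto simp: rsquarefree_def)
  fix a
  have "order a q \<le> order a p"
    using assms by (intro dvd_imp_order_le) (auto simp: rsquarefree_def)
  then show "order a q = 0 \<or> order a q = 1"
    using assms(1) unfolding rsquarefree_def by (metis le_Suc_eq le_zero_eq One_nat_def)
qed

lemma rsquarefree_linear_factor_imp_not_root:
  fixes r :: "'a::idom poly"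
  assumes "rsquarefree ([:-a, 1:] * r)"
  shows "poly r a \<noteq> 0"
proof -
  have nz: "[:-a, 1:] * r \<noteq> 0" using assms by (simp add: rsquarefree_def)
  have "order a ([:-a, 1:] * r) = 1"
    using assms nz by (intro rsquarefree_root_order) simp_all
  moreover have "order a ([:-a, 1:] * r) = 1 + order a r"
    using order_mult[OF nz] order_power_n_n[where n=1] by simp
  ultimately have "order a r = 0" by simp
  moreover have "r \<noteq> 0" using nz by auto
  ultimately show ?thesis using order_root by blast
qed

lemma rsquarefree_dvd_if_roots_subset:
  fixes p F :: "'a::alg_closed_field poly"
  assumes "rsquarefree p" and "\<forall>x. poly p x = 0 \<longrightarrow> poly F x = 0"
  shows "p dvd F"
  using assms
proof (induction "degree p" arbitrary: p F rule: less_induct)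
  case less
  show ?case
  proof (cases "degree p = 0")
    case True
    then obtain c where "p = [:c:]" by (rule degree_eq_zeroE)
    with less.prems show ?thesis by (simp add: rsquarefree_def const_poly_dvd_iff dvd_field_iff)
  next
    case False
    then obtain a where "poly p a = 0" using alg_closed_imp_poly_has_root by blast
    then obtain r where p: "p = [:-a, 1:] * r" by (metis poly_eq_0_iff_dvd dvdE)
    with less.prems have "poly F a = 0" by simp
    then obtain F' where F: "F = [:-a, 1:] * F'" by (metis poly_eq_0_iff_dvd dvdE)
    have "rsquarefree r" using rsquarefree_dvd[OF less.prems(1)] p by (metis dvd_triv_right)
    have "poly r a \<noteq> 0" using less.prems(1) p by (simp add: rsquarefree_linear_factor_imp_not_root)
    have roots: "\<forall>x. poly r x = 0 \<longrightarrow> poly F' x = 0"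
      using less.prems(2) \<open>poly r a \<noteq> 0\<close> by (auto simp: p F)
    have "degree p = Suc (degree r)"
      using \<open>rsquarefree r\<close> unfolding p by (subst degree_mult_eq) (auto simp: rsquarefree_def)
    then have "r dvd F'" using less.hyps \<open>rsquarefree r\<close> roots by simp
    then show ?thesis unfolding p F by (rule mult_dvd_mono[OF dvd_refl])
  qed
qed

lemma is_subfield_power_card_minus_one:
  fixes K :: "'k::field set"
  assumes "is_subfield K" and "finite K" and "w \<in> K" and "w \<noteq> 0"
  shows "w ^ (card K - 1) = 1"
proof -
  have mult: "\<And>x y. x \<in> K \<Longrightarrow> y \<in> K \<Longrightarrow> x * y \<in> K"
    and inverse: "\<And>x. x \<in> K \<Longrightarrow> inverse x \<in> K" and "0 \<in> K"
    using assms(1) unfolding is_subfield_def by auto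
  define U where "U = K - {0}"
  have "w ^ card U * (\<Prod>x\<in>U. x) = (\<Prod>x\<in>U. w * x)"
    by (simp add: prod.distrib)
  also have "\<dots> = (\<Prod>x\<in>U. x)"
    by (rule prod.reindex_bij_witness[where i="\<lambda>y. inverse w * y" and j="\<lambda>x. w * x"])
       (use assms(3,4) in \<open>auto simp: U_def mult inverse\<close>)
  finally have "w ^ card U = 1"
    using assms(2) by (simp add: U_def)
  moreover have "card U = card K - 1"
    using assms(2) \<open>0 \<in> K\<close> by (simp add: U_def)
  ultimately show ?thesis by simp
qed

lemma poly_pcompose_monom_scale:
  fixes f :: "'a::comm_semiring_1 poly"
  assumes "w ^ n = 1"
  shows "poly (pcompose f (monom 1 n)) (w * x) = poly (pcompose f (monom 1 n)) x"
  using assms by (simp add: poly_pcompose poly_monom power_mult_distrib)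

lemma poly_prod_pcompose_scale_eq_0_iff:
  fixes g :: "'a::idom poly"
  assumes "finite S"
  shows "poly (\<Prod>w\<in>S. pcompose g [:0, c w:]) x = 0 \<longleftrightarrow> (\<exists>w\<in>S. poly g (c w * x) = 0)"
  using assms by (simp add: poly_prod poly_pcompose prod_zero_iff mult.commute)

theorem lemma1:
  fixes q :: nat and Fq :: "'k::field set" and f g :: "'k poly"
  assumes "\<exists>p n. prime p \<and> n > 0 \<and> q = p ^ n"
    and "is_subfield Fq" and "finite Fq" and "card Fq = q"
    and "rsquarefree (map_poly (to_ac :: 'k \<Rightarrow> 'k alg_closure)
           (\<Prod>w\<in>Fq - {0}. pcompose g [:0, w:]))"
    and "\<forall>x::'k alg_closure. poly (map_poly to_ac g) x = 0 \<longrightarrow>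
           poly (map_poly to_ac (pcompose f (monom 1 (q - 1)))) x = 0"
  shows "(\<Prod>w\<in>Fq - {0}. pcompose g [:0, w:]) dvd pcompose f (monom 1 (q - 1))"
proof (rule dvd_map_poly_to_ac_imp_dvd, rule rsquarefree_dvd_if_roots_subset[OF assms(5)], intro allI impI)
  let ?F = "pcompose (map_poly to_ac f) (monom 1 (q - 1))"
  fix x :: "'k alg_closure"
  assume "poly (map_poly to_ac (\<Prod>w\<in>Fq - {0}. pcompose g [:0, w:])) x = 0"
  then have "poly (\<Prod>w\<in>Fq - {0}. pcompose (map_poly to_ac g) [:0, to_ac w:]) x = 0"
    by (simp add: map_poly_to_ac_prod map_poly_to_ac_pcompose map_poly_pCons)
  then obtain w where w: "w \<in> Fq" "w \<noteq> 0" and "poly (map_poly to_ac g) (to_ac w * x) = 0"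
    using assms(3) by (auto simp: poly_prod_pcompose_scale_eq_0_iff)
  then have "poly ?F (to_ac w * x) = 0"
    using assms(6) by (simp add: map_poly_to_ac_pcompose map_poly_monom)
  moreover have "to_ac w ^ (q - 1) = 1"
    using is_subfield_power_card_minus_one[OF assms(2,3) w] assms(4) by (simp flip: to_ac_power)
  ultimately show "poly (map_poly to_ac (pcompose f (monom 1 (q - 1)))) x = 0"
    by (simp add: map_poly_to_ac_pcompose map_poly_monom poly_pcompose_monom_scale)
qed

end
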